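(* Let $\alpha\in\mathbb{N}$, let $m$ be a positive odd integer with $m>4\alpha+2$, and let $\mathbb{S}=\langle 4,4\alpha+2,m\rangle$, with Betti elements $\beta_1=\beta_2=8\alpha+4$ and $\beta_3=2m$. Then the factorizations of $\beta_1=\beta_2$ (with respect to $(4,4\alpha+2,m)$) are exactly $(2\alpha+1,0,0)$ and $(0,2,0)$, and the factorizations of $\beta_3$ are exactly $(0,0,2)$ and the tuples $\left(\frac{m-k(2\alpha+1)}{2},k,0\right)$ where $k$ ranges over positive odd integers with $k\le\frac{m}{2\alpha+1}$.
   Context: $\mathbb{N}=\{0,1,2,\dots\}$. For a numerical semigroup $\mathbb{S}=\langle a_1,a_2,a_3\rangle$ (the set of $\mathbb{N}$-linear combinations of $a_1,a_2,a_3$) and $a\in\mathbb{S}$, a factorization of $a$ is a tuple $(\eta_1,\eta_2,\eta_3)\in\mathbb{N}^3$ with $\eta_1a_1+\eta_2a_2+\eta_3a_3=a$. *)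

theory Defs
  imports Complex_Main
begin

definition factorizations :: "nat \<Rightarrow> nat \<Rightarrow> nat \<Rightarrow> nat \<Rightarrow> (nat \<times> nat \<times> nat) set" where
  "factorizations a1 a2 a3 a = {(e1, e2, e3). e1 * a1 + e2 * a2 + e3 * a3 = a}"

end

theory Submission
  imports Defs
begin

text \<open>Write n = 2\<alpha> + 1, so that the generators are 4, 2n, m with n and m odd. As 4 and 2n are
  even and m is odd, the m-coordinate of a factorization of an even element is even; bounding it
  by the size of the element leaves only 0 for 4n < 2m, and 0 or 2 for 2m. A factorization of 2x
  without m-coordinate is a solution of 2a + nb = x, in which b has the parity of x since n is odd.\<close>

lemma mem_factorizations_iff [simp]:
  "(a, b, c) \<in> factorizations a1 a2 a3 x \<longleftrightarrow> a * a1 + b * a2 + c * a3 = x"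
  by (simp add: factorizations_def)

lemma factorization_even_coeff_iff:
  fixes a b c a1 a2 a3 x :: nat
  assumes "even a1" and "even a2" and "odd a3" and "a * a1 + b * a2 + c * a3 = x"
  shows "even c \<longleftrightarrow> even x"
  using assms by auto

lemma two_gen_even_coeff_iff:
  fixes a b n x :: nat
  assumes "odd n" and "2 * a + b * n = x"
  shows "even b \<longleftrightarrow> even x"
  using assms by auto

lemma factorizations_of_4n:
  fixes n m :: nat
  assumes "odd n" and "odd m" and "2 * n < m"
  shows "factorizations 4 (2 * n) m (4 * n) = {(n, 0, 0), (0, 2, 0)}"
proof (intro set_eqI iffI)
  fix f assume "f \<in> factorizations 4 (2 * n) m (4 * n)"
  then obtain a b c where f: "f = (a, b, c)" and eq: "a * 4 + b * (2 * n) + c * m = 4 * n"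
    by (cases f) auto
  have "c < 2"
  proof (rule ccontr)
    assume "\<not> c < 2"
    then have "2 * m \<le> c * m" by simp
    with eq assms(3) show False by linarith
  qed
  moreover have "even c"
    using factorization_even_coeff_iff[OF _ _ assms(2) eq] by simp
  ultimately have "c = 0" by presburger
  with eq have eq': "2 * a + b * n = 2 * n" by simp
  then have "even b" using two_gen_even_coeff_iff[OF assms(1) eq'] by simp
  moreover have "b \<le> 2"
  proof -
    have "b * n \<le> 2 * n" using eq' by linarith
    then show ?thesis using assms(1) by (simp add: odd_pos)
  qed
  ultimately consider "b = 0" | "b = 2" by (auto elim!: evenE simp: le_Suc_eq)
  then show "f \<in> {(n, 0, 0), (0, 2, 0)}"
    by cases (use eq' f \<open>c = 0\<close> in auto)
qed auto

lemma factorizations_of_2m: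
  fixes n m :: nat
  assumes "odd n" and "odd m"
  shows "factorizations 4 (2 * n) m (2 * m) =
    {(0, 0, 2)} \<union> {((m - k * n) div 2, k, 0) | k. odd k \<and> k * n \<le> m}"
proof (intro set_eqI iffI)
  fix f assume "f \<in> factorizations 4 (2 * n) m (2 * m)"
  then obtain a b c where f: "f = (a, b, c)" and eq: "a * 4 + b * (2 * n) + c * m = 2 * m"
    by (cases f) auto
  have "c \<le> 2"
  proof (rule ccontr)
    assume "\<not> c \<le> 2"
    then have "3 * m \<le> c * m" by simp
    moreover have "m > 0" using assms(2) by (simp add: odd_pos)
    ultimately show False using eq by linarith
  qed
  moreover have "even c"
    using factorization_even_coeff_iff[OF _ _ assms(2) eq] by simp
  ultimately consider "c = 2" | "c = 0" by (auto elim!: evenE simp: le_Suc_eq)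
  then show "f \<in> {(0, 0, 2)} \<union> {((m - k * n) div 2, k, 0) | k. odd k \<and> k * n \<le> m}"
  proof cases
    case 1
    with eq assms(1) have "a = 0 \<and> b = 0" by (auto dest: odd_pos)
    with f 1 show ?thesis by simp
  next
    case 2
    with eq have eq': "2 * a + b * n = m" by simp
    then have "odd b" using two_gen_even_coeff_iff[OF assms(1) eq'] assms(2) by simp
    moreover from eq' have "b * n \<le> m" and "a = (m - b * n) div 2" by auto
    ultimately show ?thesis using f 2 by auto
  qed
next
  fix f :: "nat \<times> nat \<times> nat"
  assume "f \<in> {(0, 0, 2)} \<union> {((m - k * n) div 2, k, 0) | k. odd k \<and> k * n \<le> m}"
  then consider "f = (0, 0, 2)"
    | k where "f = ((m - k * n) div 2, k, 0)" and "odd k" and "k * n \<le> m"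
    by blast
  then show "f \<in> factorizations 4 (2 * n) m (2 * m)"
  proof cases
    case (2 k)
    have "even (m - k * n)" using 2 assms by auto
    then have "2 * ((m - k * n) div 2) + k * n = m" using \<open>k * n \<le> m\<close> by simp
    with 2 show ?thesis by (simp add: algebra_simps)
  qed simp
qed

theorem theorem5:
  fixes \<alpha> m :: nat
  assumes "m > 0" and "odd m" and "m > 4 * \<alpha> + 2"
  shows "factorizations 4 (4 * \<alpha> + 2) m (8 * \<alpha> + 4) = {(2 * \<alpha> + 1, 0, 0), (0, 2, 0)}
     \<and> factorizations 4 (4 * \<alpha> + 2) m (2 * m) =
         {(0, 0, 2)} \<union>
         {((m - k * (2 * \<alpha> + 1)) div 2, k, 0) | k :: nat.
             k > 0 \<and> odd k \<and> real k \<le> real m / real (2 * \<alpha> + 1)}"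
proof -
  define n where "n = 2 * \<alpha> + 1"
  have "odd n" and gen: "4 * \<alpha> + 2 = 2 * n" and beta: "8 * \<alpha> + 4 = 4 * n"
    by (simp_all add: n_def)
  have "k > 0 \<and> odd k \<and> real k \<le> real m / real n \<longleftrightarrow> odd k \<and> k * n \<le> m" for k
  proof -
    have "real k \<le> real m / real n \<longleftrightarrow> real k * real n \<le> real m"
      using \<open>odd n\<close> by (simp add: pos_le_divide_eq odd_pos)
    also have "\<dots> \<longleftrightarrow> k * n \<le> m"
      by (metis of_nat_le_iff of_nat_mult)
    finally show ?thesis by (auto simp: odd_pos)
  qed
  then have conds: "{((m - k * n) div 2, k, 0) | k. k > 0 \<and> odd k \<and> real k \<le> real m / real n} =
      {((m - k * n) div 2, k, 0) | k. odd k \<and> k * n \<le> m}"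
    by simp
  show ?thesis
    unfolding gen beta n_def[symmetric] conds
    using factorizations_of_4n[OF \<open>odd n\<close> assms(2)] factorizations_of_2m[OF \<open>odd n\<close> assms(2)]
      assms(3) gen by simp
qed

end
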